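(* Let $X$ and $Y$ be random variables having the same support, and let $\mathbf{q}=(q_1,q_2)$, where $q_i:[0,1]\to[0,1]$, $i=1,2$, are distortion functions such that $\hat G_X(\mathbf q)$ and $\hat G_Y(\mathbf q)$ are finite. Then: 1. $\hat G_{X+\delta}(\mathbf q)=\hat G_X(\mathbf q)$ for all $\delta\in\mathbb{R}$; 2. $\hat G_{\gamma X}(\mathbf q)=\gamma\hat G_X(\mathbf q)$ for all $\gamma>0$; 3. $\hat G_X(\mathbf q)=0$ for any degenerate random variable $X$; 4. $\hat G_X(\mathbf q)\ge0$ for any random variable $X$; 5. $X\le_d Y$ implies $\hat G_X(\mathbf q)\le\hat G_Y(\mathbf q)$.
   Context: A distortion function is an increasing (non-strict) function $q:[0,1]\to[0,1]$ with $q(0)=0$ and $q(1)=1$. For a random variable $X$ with CDF $F$ and survival function $\overline F=1-F$, with $l=\inf\{x:F(x)>0\}$ and $r=\sup\{x:\overline F(x)>0\}$, the $\mathbf q$-distorted Gini function is $\hat G_X(\mathbf q)=\int_l^r q_1(F(x))\,q_2(\overline F(x))\,dx$. With $F^{-1}(u)=\sup\{x:F(x)\le u\}$ and $G^{-1}$ the analogous quantile function of $Y$ (CDF $G$), $X$ is smaller than $Y$ in the dispersive order, $X\le_d Y$, iff $F^{-1}(v)-F^{-1}(u)\le G^{-1}(v)-G^{-1}(u)$ whenever $0<u\le v<1$. *)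

theory Defs
  imports "HOL-Probability.Probability"
begin

definition distortion :: "(real \<Rightarrow> real) \<Rightarrow> bool" where
  "distortion q \<longleftrightarrow> mono_on {0..1} q \<and> q ` {0..1} \<subseteq> {0..1} \<and> q 0 = 0 \<and> q 1 = 1"

definition cdfX :: "'a measure \<Rightarrow> ('a \<Rightarrow> real) \<Rightarrow> real \<Rightarrow> real" where
  "cdfX M X x = measure M {\<omega> \<in> space M. X \<omega> \<le> x}"

definition lend :: "'a measure \<Rightarrow> ('a \<Rightarrow> real) \<Rightarrow> ereal" where
  "lend M X = Inf {ereal x | x. cdfX M X x > 0}"

definition rend :: "'a measure \<Rightarrow> ('a \<Rightarrow> real) \<Rightarrow> ereal" where
  "rend M X = Sup {ereal x | x. 1 - cdfX M X x > 0}"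

definition Gini_nn :: "(real \<Rightarrow> real) \<Rightarrow> (real \<Rightarrow> real) \<Rightarrow> 'a measure \<Rightarrow> ('a \<Rightarrow> real) \<Rightarrow> ennreal" where
  "Gini_nn q1 q2 M X =
     (\<integral>\<^sup>+ x \<in> {x. lend M X < ereal x \<and> ereal x < rend M X}.
        ennreal (q1 (cdfX M X x) * q2 (1 - cdfX M X x)) \<partial>lborel)"

text \<open>Its real value (meaningful when finite).\<close>
definition Gini :: "(real \<Rightarrow> real) \<Rightarrow> (real \<Rightarrow> real) \<Rightarrow> 'a measure \<Rightarrow> ('a \<Rightarrow> real) \<Rightarrow> real" where
  "Gini q1 q2 M X = enn2real (Gini_nn q1 q2 M X)"

definition quantile :: "'a measure \<Rightarrow> ('a \<Rightarrow> real) \<Rightarrow> real \<Rightarrow> real" where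
  "quantile M X u = Sup {x. cdfX M X x \<le> u}"

definition dispersive_le :: "'a measure \<Rightarrow> ('a \<Rightarrow> real) \<Rightarrow> 'b measure \<Rightarrow> ('b \<Rightarrow> real) \<Rightarrow> bool" where
  "dispersive_le M X N Y \<longleftrightarrow>
     (\<forall>u v. 0 < u \<and> u \<le> v \<and> v < 1 \<longrightarrow>
        quantile M X v - quantile M X u \<le> quantile N Y v - quantile N Y u)"

definition supportX :: "'a measure \<Rightarrow> ('a \<Rightarrow> real) \<Rightarrow> real set" where
  "supportX M X = {x. \<forall>e>0. measure M {\<omega> \<in> space M. X \<omega> \<in> {x - e<..<x + e}} > 0}"

end

theory Submission
  imports Defs
begin

text \<open>
  With the weight \<open>h(u) = q\<^sub>1(u) q\<^sub>2(1 - u)\<close>, which vanishes at 0 and 1, the Gini value is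
  \<open>\<integral> h(F x) dx\<close> over the whole line. Parts 1 and 2 are then the affine substitution
  \<open>x \<mapsto> \<gamma> x + \<delta>\<close>, and part 3 holds because a degenerate distribution function only takes
  the values 0 and 1.

  For part 5 read \<open>\<integral> h(F x) dx\<close> as \<open>\<integral> h d\<mu>\<^sub>F\<close>, where \<open>\<mu>\<^sub>F\<close> is the image of Lebesgue measure
  under \<open>F\<close>: inside \<open>(0,1)\<close> it gives \<open>(c,d]\<close> the mass \<open>F\<^sup>-\<^sup>1(d) - F\<^sup>-\<^sup>1(c)\<close>. The dispersive
  order says exactly that \<open>G\<^sup>-\<^sup>1 - F\<^sup>-\<^sup>1\<close> is nondecreasing on \<open>(0,1)\<close>, so on every \<open>(a,b] \<subseteq> (0,1)\<close>
  the difference \<open>\<mu>\<^sub>G - \<mu>\<^sub>F\<close> is the Lebesgue--Stieltjes measure of that function, hence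
  \<open>\<mu>\<^sub>F \<le> \<mu>\<^sub>G\<close>; monotone convergence over \<open>(a,b] \<nearrow> (0,1)\<close> finishes the proof.
\<close>

section \<open>Generalised inverses of distribution functions\<close>

definition gen_inverse :: "(real \<Rightarrow> real) \<Rightarrow> real \<Rightarrow> real" where
  "gen_inverse F u = Sup {x. F x \<le> u}"

locale distribution_function =
  fixes F :: "real \<Rightarrow> real"
  assumes mono: "mono F"
    and tendsto_at_bot: "(F \<longlongrightarrow> 0) at_bot"
    and tendsto_at_top: "(F \<longlongrightarrow> 1) at_top"
begin

lemma borel_measurable [measurable]: "F \<in> borel_measurable borel"
  using borel_measurable_mono mono by blast

lemma sublevel_set_nonempty:
  assumes "0 < u" shows "{x. F x \<le> u} \<noteq> {}"
proof -
  obtain N where "\<forall>x\<le>N. F x < u"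
    using order_tendstoD(2)[OF tendsto_at_bot assms] by (auto simp: eventually_at_bot_linorder)
  then show ?thesis by (metis empty_Collect_eq less_imp_le order_refl)
qed

lemma sublevel_set_bdd_above:
  assumes "u < 1" shows "bdd_above {x. F x \<le> u}"
proof -
  obtain N where "\<forall>x\<ge>N. u < F x"
    using order_tendstoD(1)[OF tendsto_at_top assms] by (auto simp: eventually_at_top_linorder)
  then have "\<forall>x\<in>{x. F x \<le> u}. x \<le> N" by (meson le_cases not_le mem_Collect_eq)
  then show ?thesis unfolding bdd_above_def by blast
qed

lemma le_gen_inverse: "F x \<le> u \<Longrightarrow> u < 1 \<Longrightarrow> x \<le> gen_inverse F u"
  unfolding gen_inverse_def by (rule cSup_upper) (auto intro: sublevel_set_bdd_above)

lemma le_if_less_gen_inverse: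
  assumes "x < gen_inverse F u" "0 < u" "u < 1"
  shows "F x \<le> u"
proof -
  obtain y where "F y \<le> u" "x < y"
    using assms sublevel_set_nonempty sublevel_set_bdd_above
    by (auto simp: gen_inverse_def less_cSup_iff)
  then show ?thesis using mono by (meson less_imp_le monoD order_trans)
qed

lemma gen_inverse_mono: "0 < u \<Longrightarrow> u \<le> v \<Longrightarrow> v < 1 \<Longrightarrow> gen_inverse F u \<le> gen_inverse F v"
  unfolding gen_inverse_def
  by (rule cSup_least) (use sublevel_set_nonempty le_gen_inverse[unfolded gen_inverse_def] in auto)

lemma emeasure_distr_Ioc:
  assumes "0 < c" "c \<le> d" "d < 1"
  shows "emeasure (distr lborel borel F) {c<..d} = gen_inverse F d - gen_inverse F c"
proof -
  let ?S = "F -` {c<..d}"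
  have "x \<in> ?S" if "gen_inverse F c < x" "x < gen_inverse F d" for x
  proof -
    have "F x \<le> d" using le_if_less_gen_inverse that assms by simp
    moreover have "\<not> F x \<le> c" using le_gen_inverse that assms by fastforce
    ultimately show ?thesis by simp
  qed
  then have inner: "{gen_inverse F c<..<gen_inverse F d} \<subseteq> ?S" by auto
  have "gen_inverse F c \<le> x \<and> x \<le> gen_inverse F d" if "x \<in> ?S" for x
    using that assms le_gen_inverse le_if_less_gen_inverse by (meson greaterThanAtMost_iff
        less_le_trans not_le order_le_less_trans vimage_eq)
  then have outer: "?S \<subseteq> {gen_inverse F c..gen_inverse F d}" by auto
  have "?S \<in> sets lborel" using measurable_sets_borel[OF borel_measurable] by simp
  then have "emeasure lborel ?S = gen_inverse F d - gen_inverse F c"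
    using emeasure_mono[OF inner, of lborel] emeasure_mono[OF outer, of lborel] gen_inverse_mono[OF assms]
    by (intro antisym) auto
  then show ?thesis by (simp add: emeasure_distr)
qed

lemma finite_borel_measure_restrict_distr:
  assumes "0 < a" "a \<le> b" "b < 1"
  shows "finite_borel_measure (density (distr lborel borel F) (indicator {a<..b}))" (is "?fin")
    and "cdf (density (distr lborel borel F) (indicator {a<..b})) x
           = gen_inverse F (max a (min b x)) - gen_inverse F a" (is "?cdf")
proof -
  let ?\<mu> = "density (distr lborel borel F) (indicator {a<..b})"
  have emeasure_\<mu>: "emeasure ?\<mu> T = emeasure (distr lborel borel F) ({a<..b} \<inter> T)"
    if "T \<in> sets borel" for T
    by (rule emeasure_restricted) (use that in auto)
  have emeasure_Iic: "emeasure ?\<mu> {..y} = gen_inverse F (max a (min b y)) - gen_inverse F a" for y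
  proof -
    have "{a<..b} \<inter> {..y} = {a<..max a (min b y)}" by auto
    then show ?thesis using assms by (simp add: emeasure_\<mu> emeasure_distr_Ioc)
  qed
  have "emeasure ?\<mu> (space ?\<mu>) = emeasure ?\<mu> {..b}"
    using emeasure_\<mu>[of UNIV] emeasure_\<mu>[of "{..b}"] by (simp add: Int_absorb2 subset_eq)
  then have "finite_measure ?\<mu>" by (intro finite_measureI) (simp add: emeasure_Iic)
  then show ?fin by (simp add: finite_borel_measure_def finite_borel_measure_axioms_def)
  show ?cdf
    using emeasure_Iic[of x] gen_inverse_mono[of a "max a (min b x)"] assms
    by (simp add: cdf_def measure_def)
qed

end

section \<open>Comparing measures through their distribution functions\<close>

lemma measure_add_if_cdf_add:
  assumes M: "finite_borel_measure M" and N: "finite_borel_measure N" and P: "finite_borel_measure P"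
    and cdf_add: "\<And>x. cdf N x = cdf M x + cdf P x"
    and A: "A \<in> sets borel"
  shows "measure N A = measure M A + measure P A"
proof -
  interpret M: finite_borel_measure M by fact
  interpret N: finite_borel_measure N by fact
  interpret P: finite_borel_measure P by fact
  have "(cdf N \<longlongrightarrow> measure M UNIV + measure P UNIV) at_top"
    unfolding cdf_add using tendsto_add[OF M.cdf_lim_at_top P.cdf_lim_at_top]
    by (simp add: M.borel_UNIV P.borel_UNIV)
  then have UNIV: "measure N UNIV = measure M UNIV + measure P UNIV"
    using tendsto_unique[OF trivial_limit_at_top_linorder N.cdf_lim_at_top] by (simp add: N.borel_UNIV)
  let ?G = "range (\<lambda>a. {..a::real})"
  have "Int_stable ?G" by (auto simp: Int_stable_def)
  moreover have "?G \<subseteq> Pow UNIV" by simp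
  moreover have "A \<in> sigma_sets UNIV ?G"
    using A by (simp add: borel_eq_atMost sets_measure_of)
  ultimately show ?thesis
  proof (induct rule: sigma_sets_induct_disjoint)
    case (basic A)
    then show ?case using cdf_add by (auto simp: cdf_def)
  next
    case empty
    show ?case by simp
  next
    case (compl A)
    then have "A \<in> sets borel" by (simp add: borel_eq_atMost sets_measure_of)
    then show ?case
      using M.finite_measure_compl N.finite_measure_compl P.finite_measure_compl compl.hyps(2) UNIV
      by (simp add: M.borel_UNIV N.borel_UNIV P.borel_UNIV M.M_is_borel N.M_is_borel P.M_is_borel)
  next
    case (union A)
    then have "range A \<subseteq> sets borel" by (simp add: borel_eq_atMost sets_measure_of)
    then have "(\<lambda>i. measure M (A i) + measure P (A i)) sums (measure M (\<Union>i. A i) + measure P (\<Union>i. A i))"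
      and "(\<lambda>i. measure N (A i)) sums measure N (\<Union>i. A i)"
      using M.finite_measure_UNION P.finite_measure_UNION N.finite_measure_UNION union.hyps(1)
      by (auto intro: sums_add simp: M.M_is_borel N.M_is_borel P.M_is_borel)
    then show ?case using union.hyps(3) sums_unique2 by auto
  qed
qed

lemma finite_borel_measure_le_if_mono_cdf_diff:
  assumes M: "finite_borel_measure M" and N: "finite_borel_measure N"
    and mono_diff: "mono (\<lambda>x. cdf N x - cdf M x)"
  shows "M \<le> N"
proof -
  interpret M: finite_borel_measure M by fact
  interpret N: finite_borel_measure N by fact
  define H where "H x = cdf N x - cdf M x" for x
  have H_tendsto_at_bot: "(H \<longlongrightarrow> 0) at_bot"
    unfolding H_def using tendsto_diff[OF N.cdf_lim_at_bot M.cdf_lim_at_bot] by simp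
  have H_nonneg: "0 \<le> H x" for x
    using H_tendsto_at_bot
    by (rule tendsto_upperbound) (use mono_diff in \<open>auto simp: H_def eventually_at_bot_linorder mono_def\<close>)
  have H_right_cont: "continuous (at_right x) H" for x
    unfolding H_def by (intro continuous_diff N.cdf_is_right_cont M.cdf_is_right_cont)
  have H_tendsto_at_top: "(H \<longlongrightarrow> measure N UNIV - measure M UNIV) at_top"
    unfolding H_def using tendsto_diff[OF N.cdf_lim_at_top M.cdf_lim_at_top]
    by (simp add: M.borel_UNIV N.borel_UNIV)
  have H_mono: "x \<le> y \<Longrightarrow> H x \<le> H y" for x y
    using mono_diff by (auto simp: H_def mono_def)
  have mass_nonneg: "0 \<le> measure N UNIV - measure M UNIV"
    using H_nonneg by (intro tendsto_lowerbound[OF H_tendsto_at_top]) auto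
  have P: "finite_borel_measure (interval_measure H)"
    by (rule finite_borel_measure_interval_measure[of H, OF H_mono H_right_cont H_tendsto_at_bot
          H_tendsto_at_top mass_nonneg])
  have "cdf N x = cdf M x + cdf (interval_measure H) x" for x
    using cdf_interval_measure[OF H_mono H_right_cont H_tendsto_at_bot] by (simp add: H_def)
  then have "measure M A \<le> measure N A" if "A \<in> sets borel" for A
    using measure_add_if_cdf_add[OF M N P _ that] by simp
  then have "emeasure M A \<le> emeasure N A" for A
    by (cases "A \<in> sets borel")
      (auto simp: M.emeasure_eq_measure N.emeasure_eq_measure measure_notin_sets M.M_is_borel N.M_is_borel)
  then show ?thesis
    by (auto simp: le_measure_iff le_fun_def M.M_is_borel N.M_is_borel M.borel_UNIV N.borel_UNIV)
qed

lemma restrict_distr_le_if_dispersive: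
  assumes F: "distribution_function F" and G: "distribution_function G"
    and dispersive: "mono_on {0<..<1} (\<lambda>u. gen_inverse G u - gen_inverse F u)"
    and ab: "0 < a" "a \<le> b" "b < 1"
  shows "density (distr lborel borel F) (indicator {a<..b})
           \<le> density (distr lborel borel G) (indicator {a<..b})"
proof (rule finite_borel_measure_le_if_mono_cdf_diff)
  interpret F: distribution_function F by fact
  interpret G: distribution_function G by fact
  show "finite_borel_measure (density (distr lborel borel F) (indicator {a<..b}))"
    and "finite_borel_measure (density (distr lborel borel G) (indicator {a<..b}))"
    using F.finite_borel_measure_restrict_distr G.finite_borel_measure_restrict_distr ab by blast+
  have "gen_inverse G (max a (min b x)) - gen_inverse F (max a (min b x))
          \<le> gen_inverse G (max a (min b y)) - gen_inverse F (max a (min b y))" if "x \<le> y" for x y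
    by (rule mono_onD[OF dispersive]) (use ab that in auto)
  then show "mono (\<lambda>x. cdf (density (distr lborel borel G) (indicator {a<..b})) x
                 - cdf (density (distr lborel borel F) (indicator {a<..b})) x)"
    unfolding F.finite_borel_measure_restrict_distr(2)[OF ab] G.finite_borel_measure_restrict_distr(2)[OF ab]
    by (intro monoI) simp
qed

lemma nn_integral_comp_le_if_dispersive:
  assumes F: "distribution_function F" and G: "distribution_function G"
    and dispersive: "mono_on {0<..<1} (\<lambda>u. gen_inverse G u - gen_inverse F u)"
    and f [measurable]: "f \<in> borel_measurable borel"
    and f_vanishes: "\<And>u. u \<notin> {0<..<1} \<Longrightarrow> f u = 0"
  shows "(\<integral>\<^sup>+x. f (F x) \<partial>lborel) \<le> (\<integral>\<^sup>+x. f (G x) \<partial>lborel)"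
proof -
  \<comment> \<open>The image measures are finite only away from 0 and 1, so exhaust \<open>(0,1)\<close> by intervals.\<close>
  define a where "a n = inverse (real n + 2)" for n :: nat
  define I where "I n = {a n<..1 - a n}" for n
  have a: "0 < a n" "a n \<le> 1 - a n" "1 - a n < 1" for n
    unfolding a_def by (auto simp: field_simps)
  have a_antimono: "a n \<le> a m" if "m \<le> n" for m n
    unfolding a_def using that by (intro le_imp_inverse_le) auto
  have "incseq I"
    unfolding incseq_def I_def by (auto dest!: a_antimono)
  moreover have "(\<Union>n. I n) = {0<..<1}"
  proof (intro antisym subsetI)
    fix u :: real assume "u \<in> {0<..<1}"
    then obtain n where "inverse (real n) < min u (1 - u)" "0 < n"
      using ex_inverse_of_nat_less[of "min u (1 - u)"] by auto
    moreover have "a n \<le> inverse (real n)" using \<open>0 < n\<close> by (simp add: a_def field_simps)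
    ultimately have "u \<in> I n" by (auto simp: I_def)
    then show "u \<in> (\<Union>n. I n)" by blast
  qed (auto simp: I_def intro: order.strict_trans[OF a(1)] order.strict_trans1[OF _ a(3)])
  ultimately have integral_eq_SUP:
    "(\<integral>\<^sup>+x. f (H x) \<partial>lborel) = (SUP n. emeasure (density (distr lborel borel H) f) (I n))"
    if [measurable]: "H \<in> borel_measurable borel" for H
  proof -
    have "(\<integral>\<^sup>+x. f (H x) \<partial>lborel) = (\<integral>\<^sup>+u. f u \<partial>distr lborel borel H)"
      by (simp add: nn_integral_distr)
    also have "\<dots> = (\<integral>\<^sup>+u. f u * indicator {0<..<1} u \<partial>distr lborel borel H)"
      by (intro nn_integral_cong) (simp add: f_vanishes split: split_indicator)
    also have "\<dots> = emeasure (density (distr lborel borel H) f) (\<Union>n. I n)"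
      by (simp add: emeasure_density \<open>(\<Union>n. I n) = {0<..<1}\<close>)
    also have "\<dots> = (SUP n. emeasure (density (distr lborel borel H) f) (I n))"
      by (intro SUP_emeasure_incseq[symmetric] \<open>incseq I\<close>) (auto simp: I_def)
    finally show ?thesis .
  qed
  have restrict_eq: "emeasure (density (distr lborel borel H) f) (I n)
          = (\<integral>\<^sup>+u. f u \<partial>density (distr lborel borel H) (indicator (I n)))"
    if [measurable]: "H \<in> borel_measurable borel" for H n
    by (simp add: emeasure_density nn_integral_density I_def mult.commute)
  note F_measurable = distribution_function.borel_measurable[OF F]
  note G_measurable = distribution_function.borel_measurable[OF G]
  have "emeasure (density (distr lborel borel F) f) (I n) \<le> emeasure (density (distr lborel borel G) f) (I n)"
    for n
    unfolding restrict_eq[OF F_measurable] restrict_eq[OF G_measurable]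
    using restrict_distr_le_if_dispersive[OF F G dispersive a(1,2,3)[of n]]
    by (intro nn_integral_mono_measure) (auto simp: I_def)
  then show ?thesis
    unfolding integral_eq_SUP[OF F_measurable] integral_eq_SUP[OF G_measurable] by (intro SUP_mono')
qed

section \<open>The distorted Gini functional\<close>

text \<open>Clamping makes the weight a product of monotone, hence Borel, functions that vanishes
  outside \<open>(0,1)\<close>.\<close>

definition distortion_weight :: "(real \<Rightarrow> real) \<Rightarrow> (real \<Rightarrow> real) \<Rightarrow> real \<Rightarrow> ennreal" where
  "distortion_weight q1 q2 u = ennreal (q1 (max 0 (min 1 u)) * q2 (max 0 (min 1 (1 - u))))"

lemma mono_distortion_clamp: "distortion q \<Longrightarrow> mono (\<lambda>u. q (max 0 (min 1 u)))"
  unfolding distortion_def mono_def mono_on_def by auto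

lemma borel_measurable_distortion_weight [measurable]:
  assumes "distortion q1" "distortion q2"
  shows "distortion_weight q1 q2 \<in> borel_measurable borel"
proof -
  have [measurable]: "(\<lambda>u. q1 (max 0 (min 1 u))) \<in> borel_measurable borel"
    and [measurable]: "(\<lambda>u. q2 (max 0 (min 1 u))) \<in> borel_measurable borel"
    using assms by (auto intro: borel_measurable_mono mono_distortion_clamp)
  show ?thesis unfolding distortion_weight_def by measurable
qed

lemma distortion_weight_eq: "0 \<le> u \<Longrightarrow> u \<le> 1 \<Longrightarrow> distortion_weight q1 q2 u = ennreal (q1 u * q2 (1 - u))"
  unfolding distortion_weight_def by simp

lemma distortion_weight_eq_0:
  "distortion q1 \<Longrightarrow> distortion q2 \<Longrightarrow> u \<notin> {0<..<1} \<Longrightarrow> distortion_weight q1 q2 u = 0"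
  unfolding distortion_weight_def distortion_def by (auto simp: max_def min_def)

lemma nn_integral_support_distortion_weight:
  fixes F :: "real \<Rightarrow> real"
  assumes F_nonneg: "\<And>x. 0 \<le> F x" and F_le_1: "\<And>x. F x \<le> 1"
    and q1: "distortion q1" and q2: "distortion q2"
  defines "l \<equiv> Inf {ereal y | y. F y > 0}" and "r \<equiv> Sup {ereal y | y. 1 - F y > 0}"
  shows "(\<integral>\<^sup>+x \<in> {x. l < ereal x \<and> ereal x < r}. ennreal (q1 (F x) * q2 (1 - F x)) \<partial>lborel)
           = (\<integral>\<^sup>+x. distortion_weight q1 q2 (F x) \<partial>lborel)"
proof (rule nn_integral_cong_AE)
  have integrands_eq: "ennreal (q1 (F x) * q2 (1 - F x)) * indicator {x. l < ereal x \<and> ereal x < r} x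
          = distortion_weight q1 q2 (F x)"
    if "x \<noteq> real_of_ereal l" "x \<noteq> real_of_ereal r" for x
  proof (cases "F x \<in> {0<..<1}")
    case True
    then have "l \<le> ereal x" "ereal x \<le> r"
      unfolding l_def r_def by (auto intro: Inf_lower Sup_upper)
    moreover have "l \<noteq> ereal x" "r \<noteq> ereal x" using that by auto
    ultimately have "l < ereal x \<and> ereal x < r" by (auto simp: less_le)
    then show ?thesis using F_nonneg F_le_1 by (simp add: distortion_weight_eq)
  next
    case False
    then have "F x = 0 \<or> F x = 1" using F_nonneg[of x] F_le_1[of x] by auto
    then show ?thesis using q1 q2 False by (auto simp: distortion_weight_eq_0 distortion_def)
  qed
  \<comment> \<open>Off the support interval \<open>F\<close> is 0 or 1, except possibly at its finite endpoints.\<close>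
  show "AE x in lborel. ennreal (q1 (F x) * q2 (1 - F x)) * indicator {x. l < ereal x \<and> ereal x < r} x
          = distortion_weight q1 q2 (F x)"
    using AE_lborel_singleton[of "real_of_ereal l"] AE_lborel_singleton[of "real_of_ereal r"]
    by eventually_elim (rule integrands_eq)
qed

lemma cdfX_eq_cdf_distr: "X \<in> borel_measurable M \<Longrightarrow> cdfX M X = cdf (distr M borel X)"
  unfolding cdfX_def cdf_def by (auto simp: measure_distr vimage_def Int_def conj_commute)

lemma (in real_distribution) distribution_function_cdf: "distribution_function (cdf M)"
  by unfold_locales (auto simp: mono_def cdf_nondecreasing cdf_lim_at_bot cdf_lim_at_top_prob)

lemma
  assumes "prob_space M" "X \<in> borel_measurable M"
  shows distribution_function_cdfX: "distribution_function (cdfX M X)"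
    and borel_measurable_cdfX: "cdfX M X \<in> borel_measurable borel"
    and cdfX_nonneg: "0 \<le> cdfX M X x"
    and cdfX_le_1: "cdfX M X x \<le> 1"
proof -
  interpret real_distribution "distr M borel X"
    using assms by (simp add: prob_space.real_distribution_distr)
  show cdfX: "distribution_function (cdfX M X)" "0 \<le> cdfX M X x" "cdfX M X x \<le> 1"
    using distribution_function_cdf cdf_nonneg cdf_bounded_prob by (simp_all add: cdfX_eq_cdf_distr assms(2))
  show "cdfX M X \<in> borel_measurable borel"
    using distribution_function.borel_measurable[OF cdfX(1)] .
qed

lemma Gini_nn_eq_nn_integral_distortion_weight:
  assumes "prob_space M" "X \<in> borel_measurable M" "distortion q1" "distortion q2"
  shows "Gini_nn q1 q2 M X = (\<integral>\<^sup>+x. distortion_weight q1 q2 (cdfX M X x) \<partial>lborel)"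
  unfolding Gini_nn_def lend_def rend_def
  using assms by (intro nn_integral_support_distortion_weight cdfX_nonneg cdfX_le_1)

lemma dispersive_le_iff_mono_on:
  "dispersive_le M X N Y \<longleftrightarrow> mono_on {0<..<1} (\<lambda>u. gen_inverse (cdfX N Y) u - gen_inverse (cdfX M X) u)"
  unfolding dispersive_le_def quantile_def gen_inverse_def mono_on_def by (auto simp: algebra_simps)

lemma cdfX_translate: "cdfX M (\<lambda>\<omega>. X \<omega> + \<delta>) x = cdfX M X (x - \<delta>)"
  unfolding cdfX_def by (simp add: algebra_simps)

lemma cdfX_scale: "0 < \<gamma> \<Longrightarrow> cdfX M (\<lambda>\<omega>. \<gamma> * X \<omega>) x = cdfX M X (x / \<gamma>)"
  unfolding cdfX_def by (simp add: pos_le_divide_eq mult.commute)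

context
  fixes M :: "'a measure" and X :: "'a \<Rightarrow> real" and q1 q2 :: "real \<Rightarrow> real"
  assumes M: "prob_space M" and X [measurable]: "X \<in> borel_measurable M"
    and q1: "distortion q1" and q2: "distortion q2"
begin

lemma Gini_nn_translate: "Gini_nn q1 q2 M (\<lambda>\<omega>. X \<omega> + \<delta>) = Gini_nn q1 q2 M X"
proof -
  note borel_measurable_cdfX[OF M X, measurable]
  have "Gini_nn q1 q2 M (\<lambda>\<omega>. X \<omega> + \<delta>) = (\<integral>\<^sup>+x. distortion_weight q1 q2 (cdfX M X (x - \<delta>)) \<partial>lborel)"
    by (simp add: Gini_nn_eq_nn_integral_distortion_weight[OF M _ q1 q2] cdfX_translate)
  also have "\<dots> = (\<integral>\<^sup>+x. distortion_weight q1 q2 (cdfX M X x) \<partial>lborel)"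
    using nn_integral_real_affine[of "\<lambda>x. distortion_weight q1 q2 (cdfX M X x)" 1 "- \<delta>"] q1 q2 by simp
  finally show ?thesis by (simp add: Gini_nn_eq_nn_integral_distortion_weight[OF M X q1 q2])
qed

lemma Gini_nn_scale:
  assumes "0 < \<gamma>"
  shows "Gini_nn q1 q2 M (\<lambda>\<omega>. \<gamma> * X \<omega>) = ennreal \<gamma> * Gini_nn q1 q2 M X"
proof -
  note borel_measurable_cdfX[OF M X, measurable]
  have "Gini_nn q1 q2 M (\<lambda>\<omega>. \<gamma> * X \<omega>) = (\<integral>\<^sup>+x. distortion_weight q1 q2 (cdfX M X (x / \<gamma>)) \<partial>lborel)"
    using assms by (simp add: Gini_nn_eq_nn_integral_distortion_weight[OF M _ q1 q2] cdfX_scale)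
  also have "\<dots> = ennreal \<gamma> * (\<integral>\<^sup>+x. distortion_weight q1 q2 (cdfX M X x) \<partial>lborel)"
    using nn_integral_real_affine[of "\<lambda>x. distortion_weight q1 q2 (cdfX M X (x / \<gamma>))" \<gamma> 0] q1 q2 assms
    by simp
  finally show ?thesis by (simp add: Gini_nn_eq_nn_integral_distortion_weight[OF M X q1 q2])
qed

lemma Gini_nn_degenerate:
  assumes "AE \<omega> in M. X \<omega> = c"
  shows "Gini_nn q1 q2 M X = 0"
proof -
  interpret prob_space M by (fact M)
  have "cdfX M X x \<notin> {0<..<1}" for x
  proof (cases "c \<le> x")
    case True
    have "AE \<omega> in M. X \<omega> \<le> x" using assms by eventually_elim (use True in auto)
    then have "cdfX M X x = 1" unfolding cdfX_def by (subst prob_Collect_eq_1) auto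
    then show ?thesis by simp
  next
    case False
    have "AE \<omega> in M. \<not> X \<omega> \<le> x" using assms by eventually_elim (use False in auto)
    then have "cdfX M X x = 0" unfolding cdfX_def by (subst prob_Collect_eq_0) auto
    then show ?thesis by simp
  qed
  then show ?thesis
    by (simp add: Gini_nn_eq_nn_integral_distortion_weight[OF M X q1 q2] distortion_weight_eq_0[OF q1 q2])
qed

lemma Gini_nn_mono_dispersive:
  assumes N: "prob_space N" and Y: "Y \<in> borel_measurable N" and dispersive: "dispersive_le M X N Y"
  shows "Gini_nn q1 q2 M X \<le> Gini_nn q1 q2 N Y"
  unfolding Gini_nn_eq_nn_integral_distortion_weight[OF M X q1 q2]
    Gini_nn_eq_nn_integral_distortion_weight[OF N Y q1 q2]
  using distribution_function_cdfX[OF M X] distribution_function_cdfX[OF N Y]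
    dispersive[unfolded dispersive_le_iff_mono_on] borel_measurable_distortion_weight[OF q1 q2]
    distortion_weight_eq_0[OF q1 q2]
  by (rule nn_integral_comp_le_if_dispersive)

end

theorem theorem2:
  fixes M :: "'a measure" and N :: "'b measure"
    and X :: "'a \<Rightarrow> real" and Y :: "'b \<Rightarrow> real"
    and q1 q2 :: "real \<Rightarrow> real"
  assumes "prob_space M" and "prob_space N"
    and "X \<in> borel_measurable M" and "Y \<in> borel_measurable N"
    and "supportX M X = supportX N Y"
    and "distortion q1" and "distortion q2"
    and "Gini_nn q1 q2 M X < \<infinity>" and "Gini_nn q1 q2 N Y < \<infinity>"
  shows "(\<forall>\<delta>::real. Gini q1 q2 M (\<lambda>\<omega>. X \<omega> + \<delta>) = Gini q1 q2 M X)
       \<and> (\<forall>\<gamma>::real. \<gamma> > 0 \<longrightarrow> Gini q1 q2 M (\<lambda>\<omega>. \<gamma> * X \<omega>) = \<gamma> * Gini q1 q2 M X)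
       \<and> (\<forall>Z. Z \<in> borel_measurable M \<and> (\<exists>c. AE \<omega> in M. Z \<omega> = c) \<longrightarrow> Gini q1 q2 M Z = 0)
       \<and> (\<forall>Z. Z \<in> borel_measurable M \<longrightarrow> Gini q1 q2 M Z \<ge> 0)
       \<and> (dispersive_le M X N Y \<longrightarrow> Gini q1 q2 M X \<le> Gini q1 q2 N Y)"
proof (intro conjI allI impI)
  show "Gini q1 q2 M (\<lambda>\<omega>. X \<omega> + \<delta>) = Gini q1 q2 M X" for \<delta>
    unfolding Gini_def by (simp add: Gini_nn_translate assms)
  show "Gini q1 q2 M (\<lambda>\<omega>. \<gamma> * X \<omega>) = \<gamma> * Gini q1 q2 M X" if "\<gamma> > 0" for \<gamma>
    unfolding Gini_def using that by (simp add: Gini_nn_scale assms enn2real_mult)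
  show "Gini q1 q2 M Z = 0" if "Z \<in> borel_measurable M \<and> (\<exists>c. AE \<omega> in M. Z \<omega> = c)" for Z
    using that Gini_nn_degenerate[OF assms(1) _ assms(6,7)] by (auto simp: Gini_def)
  show "0 \<le> Gini q1 q2 M Z" for Z
    unfolding Gini_def by simp
  show "Gini q1 q2 M X \<le> Gini q1 q2 N Y" if "dispersive_le M X N Y"
    unfolding Gini_def using Gini_nn_mono_dispersive[OF assms(1,3,6,7,2,4) that] assms(9)
    by (intro enn2real_mono) auto
qed

end
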